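(* Let $(X,Y,A)$ be a random triple with joint distribution $\mathcal{D}$, where $X$ takes values in a measurable space $\mathcal{X}$, $Y\in\{0,1\}$, and $A$ is a discrete random variable with values in $\mathcal{A}$. Let $f:\mathcal{X}\to[0,1]$ be any measurable predictor. Then \[ \mathrm{Suf}_f \le 4\,\mathbb{E}_{A,X}\big[\,|f(X)-f^{\mathrm{Bayes}}_A(X)|\,\big]. \] In particular, if $|\mathcal{A}|<\infty$ and $A$ is uniformly distributed, $\mathcal{D}(A=a)=1/|\mathcal{A}|$ for all $a\in\mathcal{A}$, then \[ \mathrm{Suf}_f \le \frac{4}{|\mathcal{A}|}\sum_{a\in\mathcal{A}} \mathbb{E}_X\big[\,|f(X)-f^{\mathrm{Bayes}}_{A=a}(X)|\;\big|\;A=a\big]. \]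
   Context: The $A$-group Bayes predictor is $f^{\mathrm{Bayes}}_A(X)=\mathbb{E}[Y\mid X,A]$, a function of $(X,A)$; for fixed $a$, $f^{\mathrm{Bayes}}_{A=a}(x)=\mathbb{E}[Y\mid X=x,A=a]$. The group sufficiency gap of a predictor $f$ is $\mathrm{Suf}_f=\mathbb{E}_{A,X}\big[\,|\mathbb{E}[Y\mid f(X)]-\mathbb{E}[Y\mid f(X),A]|\,\big]$, where $\mathbb{E}_{A,X}$ denotes expectation with respect to the marginal distribution of $(A,X)$ under $\mathcal{D}$. *)

theory Defs
  imports "HOL-Probability.Probability"
begin

text \<open>Conditional expectations are realised as functions on the sample space via
  real_cond_exp w.r.t. the sigma-algebra generated by the conditioning variables.\<close>

definition sigma_gen :: "'w measure \<Rightarrow> ('w \<Rightarrow> 'b) \<Rightarrow> 'b measure \<Rightarrow> 'w measure" where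
  "sigma_gen M g N = vimage_algebra (space M) g N"

definition cond_exp_fX :: "'w measure \<Rightarrow> ('w \<Rightarrow> 'x) \<Rightarrow> ('w \<Rightarrow> real) \<Rightarrow> ('x \<Rightarrow> real) \<Rightarrow> ('w \<Rightarrow> real)" where
  "cond_exp_fX M X Y f = real_cond_exp M (sigma_gen M (\<lambda>w. f (X w)) borel) Y"

definition cond_exp_fX_A :: "'w measure \<Rightarrow> ('w \<Rightarrow> 'x) \<Rightarrow> ('w \<Rightarrow> real) \<Rightarrow> ('w \<Rightarrow> 'a) \<Rightarrow> 'a set
    \<Rightarrow> ('x \<Rightarrow> real) \<Rightarrow> ('w \<Rightarrow> real)" where
  "cond_exp_fX_A M X Y A AA f =
     real_cond_exp M (sigma_gen M (\<lambda>w. (f (X w), A w)) (borel \<Otimes>\<^sub>M count_space AA)) Y"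

definition bayes_A :: "'w measure \<Rightarrow> 'x measure \<Rightarrow> ('w \<Rightarrow> 'x) \<Rightarrow> ('w \<Rightarrow> real) \<Rightarrow> ('w \<Rightarrow> 'a) \<Rightarrow> 'a set
    \<Rightarrow> ('w \<Rightarrow> real)" where
  "bayes_A M N X Y A AA = real_cond_exp M (sigma_gen M (\<lambda>w. (X w, A w)) (N \<Otimes>\<^sub>M count_space AA)) Y"

definition suf_gap :: "'w measure \<Rightarrow> ('w \<Rightarrow> 'x) \<Rightarrow> ('w \<Rightarrow> real) \<Rightarrow> ('w \<Rightarrow> 'a) \<Rightarrow> 'a set
    \<Rightarrow> ('x \<Rightarrow> real) \<Rightarrow> real" where
  "suf_gap M X Y A AA f =
     (\<integral>w. \<bar>cond_exp_fX M X Y f w - cond_exp_fX_A M X Y A AA f w\<bar> \<partial>M)"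

definition cond_exp_event :: "'w measure \<Rightarrow> ('w \<Rightarrow> 'a) \<Rightarrow> 'a \<Rightarrow> ('w \<Rightarrow> real) \<Rightarrow> real" where
  "cond_exp_event M A a g =
     (\<integral>w. g w * indicator {w \<in> space M. A w = a} w \<partial>M) / measure M {w \<in> space M. A w = a}"

end

theory Submission
  imports Defs
begin

text \<open>Write \<open>g = f(X)\<close>. Both \<open>\<sigma>(f(X))\<close> and \<open>\<sigma>(f(X), A)\<close> are contained in \<open>\<sigma>(X, A)\<close>, and \<open>g\<close> is
  measurable with respect to each of them. Conditioning is an \<open>L\<^sup>1\<close>-contraction, so for every
  such sub-\<open>\<sigma>\<close>-algebra \<open>F\<close> the tower property gives
  \<open>E|E[Y|F] - g| = E|E[E[Y|X,A] - g | F]| \<le> E|E[Y|X,A] - g|\<close>. The triangle inequality through \<open>g\<close>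
  then bounds the sufficiency gap by \<open>2 E|g - f\<^sup>B\<^sup>a\<^sup>y\<^sup>e\<^sup>s\<^sub>A(X)|\<close>. For uniformly distributed \<open>A\<close>,
  the law of total expectation rewrites \<open>E[h]\<close> as \<open>|\<A>|\<^sup>-\<^sup>1 \<Sum>\<^sub>a E[h | A = a]\<close>.\<close>

context sigma_finite_subalgebra
begin

lemma integral_abs_real_cond_exp_le:
  assumes "integrable M h"
  shows "(\<integral>w. \<bar>real_cond_exp M F h w\<bar> \<partial>M) \<le> (\<integral>w. \<bar>h w\<bar> \<partial>M)"
proof -
  have "convex_on UNIV (abs :: real \<Rightarrow> real)"
    using convex_on_dist[of UNIV "0::real"] by (simp add: dist_real_def)
  then have "AE w in M. \<bar>real_cond_exp M F h w\<bar> \<le> real_cond_exp M F (\<lambda>w. \<bar>h w\<bar>) w"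
    using real_cond_exp_jensens_inequality(2)[of h UNIV, where q = abs] assms by auto
  then have "(\<integral>w. \<bar>real_cond_exp M F h w\<bar> \<partial>M) \<le> (\<integral>w. real_cond_exp M F (\<lambda>w. \<bar>h w\<bar>) w \<partial>M)"
    by (intro integral_mono_AE) (use assms real_cond_exp_int(1) in auto)
  also have "\<dots> = (\<integral>w. \<bar>h w\<bar> \<partial>M)"
    using real_cond_exp_int(2) assms by auto
  finally show ?thesis .
qed

lemma integral_abs_real_cond_exp_diff_mono:
  assumes G: "subalgebra M G" and GF: "subalgebra G F"
    and Y: "integrable M Y" and g: "integrable M g" and gF: "g \<in> borel_measurable F"
  shows "(\<integral>w. \<bar>real_cond_exp M F Y w - g w\<bar> \<partial>M) \<le> (\<integral>w. \<bar>real_cond_exp M G Y w - g w\<bar> \<partial>M)"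
proof -
  interpret G: sigma_finite_subalgebra M G
    by (rule nested_subalg_is_sigma_finite[OF G GF])
  have GY: "integrable M (real_cond_exp M G Y)"
    using G.real_cond_exp_int(1)[OF Y] .
  have "AE w in M. real_cond_exp M F (\<lambda>w. real_cond_exp M G Y w - g w) w
      = real_cond_exp M F (real_cond_exp M G Y) w - real_cond_exp M F g w"
    using real_cond_exp_diff[OF GY g] .
  moreover have "AE w in M. real_cond_exp M F (real_cond_exp M G Y) w = real_cond_exp M F Y w"
    using real_cond_exp_nested_subalg[OF G GF Y] .
  moreover have "AE w in M. real_cond_exp M F g w = g w"
    using real_cond_exp_F_meas[OF g gF] .
  ultimately have "AE w in M. \<bar>real_cond_exp M F Y w - g w\<bar>
      = \<bar>real_cond_exp M F (\<lambda>w. real_cond_exp M G Y w - g w) w\<bar>"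
    by auto
  then have "(\<integral>w. \<bar>real_cond_exp M F Y w - g w\<bar> \<partial>M)
      = (\<integral>w. \<bar>real_cond_exp M F (\<lambda>w. real_cond_exp M G Y w - g w) w\<bar> \<partial>M)"
    by (intro integral_cong_AE) (use g in auto)
  also have "\<dots> \<le> (\<integral>w. \<bar>real_cond_exp M G Y w - g w\<bar> \<partial>M)"
    by (rule integral_abs_real_cond_exp_le) (use GY g in auto)
  finally show ?thesis .
qed

end

lemma integral_abs_real_cond_exp_diff_le_twice:
  assumes "finite_measure M" and G: "subalgebra M G"
    and F1: "subalgebra G F1" and F2: "subalgebra G F2"
    and Y: "integrable M Y" and g: "integrable M g"
    and gF1: "g \<in> borel_measurable F1" and gF2: "g \<in> borel_measurable F2"
  shows "(\<integral>w. \<bar>real_cond_exp M F1 Y w - real_cond_exp M F2 Y w\<bar> \<partial>M)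
           \<le> 2 * (\<integral>w. \<bar>real_cond_exp M G Y w - g w\<bar> \<partial>M)"
proof -
  interpret finite_measure M by fact
  have "subalgebra M F1" "subalgebra M F2"
    using G F1 F2 by (auto simp: subalgebra_def)
  then interpret F1: finite_measure_subalgebra M F1 + F2: finite_measure_subalgebra M F2
    by unfold_locales
  have C1: "integrable M (real_cond_exp M F1 Y)" and C2: "integrable M (real_cond_exp M F2 Y)"
    using F1.real_cond_exp_int(1) F2.real_cond_exp_int(1) Y by auto
  have "(\<integral>w. \<bar>real_cond_exp M F1 Y w - real_cond_exp M F2 Y w\<bar> \<partial>M)
      \<le> (\<integral>w. \<bar>real_cond_exp M F1 Y w - g w\<bar> + \<bar>real_cond_exp M F2 Y w - g w\<bar> \<partial>M)"
    by (rule integral_mono) (use C1 C2 g in auto)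
  also have "\<dots> = (\<integral>w. \<bar>real_cond_exp M F1 Y w - g w\<bar> \<partial>M) + (\<integral>w. \<bar>real_cond_exp M F2 Y w - g w\<bar> \<partial>M)"
    by (rule Bochner_Integration.integral_add) (use C1 C2 g in auto)
  also have "\<dots> \<le> 2 * (\<integral>w. \<bar>real_cond_exp M G Y w - g w\<bar> \<partial>M)"
    using F1.integral_abs_real_cond_exp_diff_mono[OF G F1 Y g gF1]
      F2.integral_abs_real_cond_exp_diff_mono[OF G F2 Y g gF2] by simp
  finally show ?thesis .
qed

lemma measurable_sigma_gen: "g \<in> space M \<rightarrow> space N \<Longrightarrow> g \<in> sigma_gen M g N \<rightarrow>\<^sub>M N"
  unfolding sigma_gen_def by (rule measurable_vimage_algebra1)

lemma subalgebra_sigma_gen: "g \<in> M \<rightarrow>\<^sub>M N \<Longrightarrow> subalgebra M (sigma_gen M g N)"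
  unfolding subalgebra_def sigma_gen_def by (simp add: sets_image_in_sets)

lemma subalgebra_sigma_gen_comp:
  assumes "g \<in> space M \<rightarrow> space N" and "\<phi> \<in> N \<rightarrow>\<^sub>M K"
  shows "subalgebra (sigma_gen M g N) (sigma_gen M (\<lambda>w. \<phi> (g w)) K)"
proof -
  have "(\<lambda>w. \<phi> (g w)) \<in> sigma_gen M g N \<rightarrow>\<^sub>M K"
    using measurable_sigma_gen[OF assms(1)] assms(2) by (rule measurable_compose)
  from subalgebra_sigma_gen[OF this] show ?thesis
    by (simp add: sigma_gen_def)
qed

lemma integral_eq_sum_cond_exp_event:
  assumes "finite_measure M" and "finite AA" and A: "A \<in> M \<rightarrow>\<^sub>M count_space AA"
    and h: "integrable M h"
  shows "(\<integral>w. h w \<partial>M) = (\<Sum>a\<in>AA. measure M {w \<in> space M. A w = a} * cond_exp_event M A a h)"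
proof -
  interpret finite_measure M by fact
  define E where "E a = {w \<in> space M. A w = a}" for a
  have E_sets: "E a \<in> sets M" for a
  proof -
    have "E a = A -` ({a} \<inter> AA) \<inter> space M"
      using measurable_space[OF A] by (auto simp: E_def)
    then show ?thesis
      using measurable_sets[OF A, of "{a} \<inter> AA"] by simp
  qed
  have hE: "integrable M (\<lambda>w. h w * indicator (E a) w)" for a
    using integrable_mult_indicator[OF E_sets h] by (simp add: mult.commute)
  have "(\<integral>w. h w \<partial>M) = (\<integral>w. (\<Sum>a\<in>AA. h w * indicator (E a) w) \<partial>M)"
  proof (rule Bochner_Integration.integral_cong[OF refl])
    fix w assume "w \<in> space M"
    then have "A w \<in> AA" and "w \<in> E a \<longleftrightarrow> A w = a" for a
      using measurable_space[OF A] by (auto simp: E_def)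
    then show "h w = (\<Sum>a\<in>AA. h w * indicator (E a) w)"
      using \<open>finite AA\<close> by (simp add: indicator_def if_distrib sum.delta)
  qed
  also have "\<dots> = (\<Sum>a\<in>AA. (\<integral>w. h w * indicator (E a) w \<partial>M))"
    by (rule Bochner_Integration.integral_sum) (rule hE)
  also have "\<dots> = (\<Sum>a\<in>AA. measure M (E a) * cond_exp_event M A a h)"
  proof (rule sum.cong[OF refl])
    fix a
    show "(\<integral>w. h w * indicator (E a) w \<partial>M) = measure M (E a) * cond_exp_event M A a h"
    proof (cases "measure M (E a) = 0")
      \<comment> \<open>On a null event \<open>cond_exp_event\<close> divides by zero and yields \<open>0\<close>; so does the integral.\<close>
      case True
      then have "AE w in M. w \<notin> E a"
        using E_sets by (intro AE_not_in) (simp add: null_sets_def emeasure_eq_measure)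
      then have "(\<integral>w. h w * indicator (E a) w \<partial>M) = 0"
        by (intro integral_eq_zero_AE) auto
      with True show ?thesis by simp
    qed (simp add: cond_exp_event_def E_def)
  qed
  finally show ?thesis by (simp add: E_def)
qed

lemma integrable_bayes_A:
  assumes "finite_measure M" and "X \<in> M \<rightarrow>\<^sub>M N" and "A \<in> M \<rightarrow>\<^sub>M count_space AA"
    and "integrable M Y"
  shows "integrable M (bayes_A M N X Y A AA)"
proof -
  interpret finite_measure M by fact
  have "(\<lambda>w. (X w, A w)) \<in> M \<rightarrow>\<^sub>M N \<Otimes>\<^sub>M count_space AA"
    using assms(2,3) by measurable
  then have "subalgebra M (sigma_gen M (\<lambda>w. (X w, A w)) (N \<Otimes>\<^sub>M count_space AA))"
    by (rule subalgebra_sigma_gen)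
  then interpret finite_measure_subalgebra M "sigma_gen M (\<lambda>w. (X w, A w)) (N \<Otimes>\<^sub>M count_space AA)"
    by unfold_locales
  show ?thesis
    unfolding bayes_A_def using real_cond_exp_int(1)[OF assms(4)] .
qed

lemma suf_gap_le_twice:
  assumes "finite_measure M" and X: "X \<in> M \<rightarrow>\<^sub>M N" and A: "A \<in> M \<rightarrow>\<^sub>M count_space AA"
    and Y: "integrable M Y" and "f \<in> borel_measurable N" and fX: "integrable M (\<lambda>w. f (X w))"
  shows "suf_gap M X Y A AA f \<le> 2 * (\<integral>w. \<bar>f (X w) - bayes_A M N X Y A AA w\<bar> \<partial>M)"
proof -
  note [measurable] = X A \<open>f \<in> borel_measurable N\<close>
  define g where "g = (\<lambda>w. f (X w))"
  define G where "G = sigma_gen M (\<lambda>w. (X w, A w)) (N \<Otimes>\<^sub>M count_space AA)"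
  have XA: "(\<lambda>w. (X w, A w)) \<in> M \<rightarrow>\<^sub>M N \<Otimes>\<^sub>M count_space AA"
    by measurable
  have XA_space: "(\<lambda>w. (X w, A w)) \<in> space M \<rightarrow> space (N \<Otimes>\<^sub>M count_space AA)"
    using measurable_space[OF XA] by (rule funcsetI)
  have G: "subalgebra M G"
    unfolding G_def by (rule subalgebra_sigma_gen[OF XA])
  have F1: "subalgebra G (sigma_gen M g borel)"
    using subalgebra_sigma_gen_comp[OF XA_space, of "\<lambda>p. f (fst p)" borel]
    by (simp add: G_def g_def)
  have F2: "subalgebra G (sigma_gen M (\<lambda>w. (g w, A w)) (borel \<Otimes>\<^sub>M count_space AA))"
    using subalgebra_sigma_gen_comp[OF XA_space, of "\<lambda>p. (f (fst p), snd p)" "borel \<Otimes>\<^sub>M count_space AA"]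
    by (simp add: G_def g_def)
  have gF1: "g \<in> borel_measurable (sigma_gen M g borel)"
    by (rule measurable_sigma_gen) simp
  have "(\<lambda>w. (g w, A w)) \<in> sigma_gen M (\<lambda>w. (g w, A w)) (borel \<Otimes>\<^sub>M count_space AA)
      \<rightarrow>\<^sub>M borel \<Otimes>\<^sub>M count_space AA"
    by (rule measurable_sigma_gen) (use measurable_space[OF A] in \<open>auto simp: space_pair_measure\<close>)
  then have gF2: "g \<in> borel_measurable (sigma_gen M (\<lambda>w. (g w, A w)) (borel \<Otimes>\<^sub>M count_space AA))"
    using measurable_compose[OF _ measurable_fst] by simp
  from integral_abs_real_cond_exp_diff_le_twice[OF assms(1) G F1 F2 Y fX[folded g_def] gF1 gF2]
  show ?thesis
    by (simp add: suf_gap_def cond_exp_fX_def cond_exp_fX_A_def bayes_A_def g_def G_def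
        abs_minus_commute)
qed

theorem theorem1:
  fixes M :: "'w measure" and N :: "'x measure"
    and X :: "'w \<Rightarrow> 'x" and Y :: "'w \<Rightarrow> real" and A :: "'w \<Rightarrow> 'a" and AA :: "'a set"
    and f :: "'x \<Rightarrow> real"
  assumes "prob_space M"
    and "X \<in> M \<rightarrow>\<^sub>M N"
    and "Y \<in> borel_measurable M" and "\<forall>w\<in>space M. Y w \<in> {0, 1}"
    and "countable AA" and "A \<in> M \<rightarrow>\<^sub>M count_space AA"
    and "f \<in> borel_measurable N" and "\<forall>x\<in>space N. f x \<in> {0..1}"
  shows "suf_gap M X Y A AA f
           \<le> 4 * (\<integral>w. \<bar>f (X w) - bayes_A M N X Y A AA w\<bar> \<partial>M)
       \<and> ((finite AA \<and> (\<forall>a\<in>AA. measure M {w \<in> space M. A w = a} = 1 / real (card AA))) \<longrightarrow>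
           suf_gap M X Y A AA f
             \<le> 4 / real (card AA) *
                (\<Sum>a\<in>AA. cond_exp_event M A a (\<lambda>w. \<bar>f (X w) - bayes_A M N X Y A AA w\<bar>)))"
proof -
  \<comment> \<open>The ranges of \<open>Y\<close> and \<open>f\<close> matter only through boundedness, hence integrability.\<close>
  interpret prob_space M by fact
  define h where "h = (\<lambda>w. \<bar>f (X w) - bayes_A M N X Y A AA w\<bar>)"
  have Y: "integrable M Y"
    by (rule integrable_const_bound[where B=1]) (use assms(3,4) in \<open>auto intro!: AE_I2\<close>)
  have fX: "integrable M (\<lambda>w. f (X w))"
    by (rule integrable_const_bound[where B=1])
      (use assms(2,7,8) measurable_space[OF assms(2)] in \<open>auto intro!: AE_I2\<close>)
  have gap: "suf_gap M X Y A AA f \<le> 2 * (\<integral>w. h w \<partial>M)"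
    unfolding h_def by (rule suf_gap_le_twice[OF finite_measure_axioms assms(2,6) Y assms(7) fX])
  have h_int: "integrable M h"
    unfolding h_def
    by (intro integrable_abs Bochner_Integration.integrable_diff fX
        integrable_bayes_A[OF finite_measure_axioms assms(2,6) Y])
  have "0 \<le> (\<integral>w. h w \<partial>M)"
    unfolding h_def by simp
  with gap have "suf_gap M X Y A AA f \<le> 4 * (\<integral>w. h w \<partial>M)"
    by linarith
  moreover have "4 / real (card AA) * (\<Sum>a\<in>AA. cond_exp_event M A a h) = 4 * (\<integral>w. h w \<partial>M)"
    if "finite AA" and uniform: "\<forall>a\<in>AA. measure M {w \<in> space M. A w = a} = 1 / real (card AA)"
    using integral_eq_sum_cond_exp_event[OF finite_measure_axioms \<open>finite AA\<close> assms(6) h_int] uniform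
    by (simp add: sum_distrib_left)
  ultimately show ?thesis
    unfolding h_def[symmetric] by simp
qed

end
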